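(* Let $x,y$ be fixed real (or complex) numbers. For each such $x$ let $\kappa_x:\mathbb{Z}_{>0}\to\mathbb{C}$ be the recursive divisor function defined by $$\kappa_x(n) = n^x + \sum_{d \mid n,\ d<n} \kappa_x(d)\qquad (n\ge 1).$$ Then the following identities of arithmetic functions hold: 1. $\kappa_x * \sigma_y = \kappa_y * \sigma_x$; 2. $\kappa_x = (\mathrm{id}_x + \mathbf{1} * \kappa_x)/2$; 3. $\kappa_x = \dfrac{\mathrm{id}_x}{2} + \dfrac{\mathbf{1}*\mathrm{id}_x}{2^2} + \dfrac{\mathbf{1}*\mathbf{1}*\mathrm{id}_x}{2^3} + \cdots$, i.e. $\kappa_x(n)=\sum_{k\ge 0} 2^{-(k+1)}(\mathbf{1}^{*k}*\mathrm{id}_x)(n)$ for every $n$, where $\mathbf{1}^{*k}$ is the $k$-fold Dirichlet convolution power of $\mathbf{1}$ (with $\mathbf{1}^{*0}=\varepsilon$); 4. $\kappa_x = J_x * \kappa_0$; 5. $\kappa_x^{-1} = J_x^{-1} * (2\mu - \varepsilon)$; 6. $\sigma_x = \kappa_x * (2\cdot\mathbf{1} - d)$.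
   Context: Arithmetic functions are functions $\mathbb{Z}_{>0}\to\mathbb{C}$, added and scaled pointwise. $f*g$ denotes Dirichlet convolution, $(f*g)(n)=\sum_{d\mid n} f(d)g(n/d)$, and $f^{-1}$ denotes the Dirichlet inverse of $f$ (which exists when $f(1)\neq 0$). Notation: $\varepsilon(n)=1$ if $n=1$ and $0$ otherwise; $\mathbf{1}(n)=1$ for all $n$; $\mathrm{id}_x(n)=n^x$; $\mu$ is the Möbius function; $\sigma_x(n)=\sum_{d\mid n} d^x$; $d(n)=\sigma_0(n)$ is the number of divisors of $n$; $J_x=\mu*\mathrm{id}_x$ is Jordan's totient function (so $J_0=\varepsilon$ and $J_1=\phi$); $\kappa_0$ is $\kappa_x$ with $x=0$. *)

theory Defs
  imports "HOL-Analysis.Complex_Transcendental" "HOL-Computational_Algebra.Squarefree"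
begin

text \<open>Arithmetic functions are modelled as functions nat => complex; only the
values at positive arguments are meaningful.\<close>

definition dconv :: "(nat \<Rightarrow> complex) \<Rightarrow> (nat \<Rightarrow> complex) \<Rightarrow> nat \<Rightarrow> complex" where
  "dconv f g n = (\<Sum>d\<in>{d. d dvd n}. f d * g (n div d))"

definition eps :: "nat \<Rightarrow> complex" where
  "eps n = (if n = 1 then 1 else 0)"

definition one_fn :: "nat \<Rightarrow> complex" where
  "one_fn n = 1"

definition id_pow :: "complex \<Rightarrow> nat \<Rightarrow> complex" where
  "id_pow x n = (of_nat n :: complex) powr x"

definition mu :: "nat \<Rightarrow> complex" where
  "mu n = (if squarefree n then (-1) ^ card (prime_factors n) else 0)"

definition sigma :: "complex \<Rightarrow> nat \<Rightarrow> complex" where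
  "sigma x n = (\<Sum>d\<in>{d. d dvd n}. (of_nat d :: complex) powr x)"

definition jordan :: "complex \<Rightarrow> nat \<Rightarrow> complex" where
  "jordan x = dconv mu (id_pow x)"

fun dpow :: "(nat \<Rightarrow> complex) \<Rightarrow> nat \<Rightarrow> nat \<Rightarrow> complex" where
  "dpow f 0 = eps"
| "dpow f (Suc k) = dconv f (dpow f k)"

definition dinv :: "(nat \<Rightarrow> complex) \<Rightarrow> nat \<Rightarrow> complex" where
  "dinv f = (THE g. (\<forall>n>0. dconv f g n = eps n) \<and> g 0 = 0)"

function kappa :: "complex \<Rightarrow> nat \<Rightarrow> complex" where
  "kappa x n = (if n = 0 then 0 else
     (of_nat n :: complex) powr x + (\<Sum>d\<in>{d. d dvd n \<and> d < n}. kappa x d))"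
  by pat_completeness auto
termination
  by (relation "measure snd") auto

declare kappa.simps [simp del]

end

theory Submission
  imports Defs
begin

text \<open>Write T = 2\<epsilon> - 1. The defining recursion of kappa_x says exactly
  kappa_x * T = id_x, and since T(1) \<noteq> 0, T can be cancelled from Dirichlet convolutions.
  Identities 1, 2, 4 and 6 then follow by convolving with T and using commutativity,
  associativity and \<mu> * 1 = \<epsilon>. For 5, id_x is completely multiplicative with inverse
  \<mu> id_x, so kappa_x^-1 = \<mu> id_x * T and J_x^-1 = 1 * \<mu> id_x, while 2\<mu> - \<epsilon> = \<mu> * T.
  Identity 3 is the geometric series for T^-1: the terms b_k = (1^*k * id_x)(n) / 2^(k+1)
  satisfy b_(k+1) = b_k / 2 + c_k, where c_k collects the corresponding series at the proper
  divisors of n, so convergence and the value follow by strong induction on n.\<close>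

text \<open>The divisor set of 0 is infinite, so every convolution vanishes at 0 (the junk value
  of an infinite sum); this lets identities between convolutions be stated as equalities
  of functions.\<close>

lemma dconv_0 [simp]: "dconv f g 0 = 0"
  by (simp add: dconv_def)

lemma dconv_1: "dconv f g 1 = f 1 * g 1"
  by (simp add: dconv_def)

lemma dconv_eq_sum_pairs:
  assumes "n > 0"
  shows "dconv f g n = (\<Sum>(a, b)\<in>{(a, b). a * b = n}. f a * g b)"
  unfolding dconv_def
  by (rule sum.reindex_bij_witness[where i=fst and j="\<lambda>d. (d, n div d)"]) (use assms in auto)

lemma finite_divisor_pairs: "n > 0 \<Longrightarrow> finite {(a, b). a * b = (n::nat)}"
proof -
  assume "n > 0"
  then have "{(a, b). a * b = n} = (\<lambda>d. (d, n div d)) ` {d. d dvd n}"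
    by (force simp: image_iff)
  with \<open>n > 0\<close> show ?thesis by simp
qed

lemma dconv_dconv_eq_sum_triples:
  assumes n: "n > 0"
  shows "dconv (dconv f g) h n = (\<Sum>(a, b, c)\<in>{(a, b, c). a * b * c = n}. f a * g b * h c)"
proof -
  have inner: "dconv f g d * h c = (\<Sum>(a, b)\<in>{(a, b). a * b = d}. f a * g b * h c)"
    if "d * c = n" for d c
  proof -
    from that n have "d > 0" by (cases d) auto
    then show ?thesis by (simp add: dconv_eq_sum_pairs sum_distrib_right case_prod_unfold)
  qed
  have "dconv (dconv f g) h n
      = (\<Sum>(d, c)\<in>{(d, c). d * c = n}. \<Sum>(a, b)\<in>{(a, b). a * b = d}. f a * g b * h c)"
    unfolding dconv_eq_sum_pairs[OF n] by (intro sum.cong refl) (auto simp: inner)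
  also have "\<dots> = (\<Sum>((d, c), (a, b))\<in>Sigma {(d, c). d * c = n} (\<lambda>(d, c). {(a, b). a * b = d}).
                     f a * g b * h c)"
    using n by (subst sum.Sigma[symmetric]) (auto intro!: finite_divisor_pairs sum.cong intro: gr0I)
  also have "\<dots> = (\<Sum>(a, b, c)\<in>{(a, b, c). a * b * c = n}. f a * g b * h c)"
    by (rule sum.reindex_bij_witness[where i="\<lambda>(a, b, c). ((a * b, c), (a, b))"
                                        and j="\<lambda>((d, c), (a, b)). (a, b, c)"]) auto
  finally show ?thesis .
qed

lemma dconv_commute: "dconv f g = dconv g f"
proof
  fix n show "dconv f g n = dconv g f n"
  proof (cases "n = 0")
    case False
    then show ?thesis
      by (simp add: dconv_eq_sum_pairs)
         (rule sum.reindex_bij_witness[where i=prod.swap and j=prod.swap]; auto)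
  qed simp
qed

lemma dconv_assoc: "dconv (dconv f g) h = dconv f (dconv g h)"
proof
  fix n show "dconv (dconv f g) h n = dconv f (dconv g h) n"
  proof (cases "n = 0")
    case False
    then have "dconv f (dconv g h) n = (\<Sum>(a, b, c)\<in>{(a, b, c). a * b * c = n}. g a * h b * f c)"
      by (simp add: dconv_commute[of f] dconv_dconv_eq_sum_triples)
    also have "\<dots> = (\<Sum>(a, b, c)\<in>{(a, b, c). a * b * c = n}. f a * g b * h c)"
      by (rule sum.reindex_bij_witness[where i="\<lambda>(a, b, c). (b, c, a)" and j="\<lambda>(a, b, c). (c, a, b)"])
         (auto simp: ac_simps)
    finally show ?thesis using False by (simp add: dconv_dconv_eq_sum_triples)
  qed simp
qed

interpretation dconv: abel_semigroup dconv
  by unfold_locales (rule dconv_assoc, rule dconv_commute)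

lemma dconv_cong:
  assumes "\<And>m. m > 0 \<Longrightarrow> f m = f' m" "\<And>m. m > 0 \<Longrightarrow> g m = g' m"
  shows "dconv f g = dconv f' g'"
proof
  fix n show "dconv f g n = dconv f' g' n"
  proof (cases "n = 0")
    case False
    have "f d * g (n div d) = f' d * g' (n div d)" if "d dvd n" for d
    proof -
      from that False have "d > 0" "n div d > 0" by (auto intro: gr0I simp: dvd_div_eq_0_iff)
      then show ?thesis by (simp add: assms)
    qed
    then show ?thesis by (simp add: dconv_def)
  qed simp
qed

lemma dconv_eps: "n > 0 \<Longrightarrow> dconv f eps n = f n"
proof -
  assume "n > 0"
  then have "dconv f eps n = (\<Sum>d | d dvd n. if d = n then f n else 0)"
    unfolding dconv_def eps_def by (intro sum.cong refl) (auto elim!: dvdE)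
  with \<open>n > 0\<close> show ?thesis by simp
qed

lemma dconv_eps_eq: "f 0 = 0 \<Longrightarrow> dconv f eps = f"
  by (rule ext) (metis bot_nat_0.not_eq_extremum dconv_0 dconv_eps)

lemma dconv_one_fn: "dconv f one_fn n = (\<Sum>d | d dvd n. f d)"
  by (simp add: dconv_def one_fn_def)

lemma sum_divisors_eq_proper_divisors:
  assumes "n > (0 :: nat)"
  shows "(\<Sum>d | d dvd n. f d) = f n + (\<Sum>d | d dvd n \<and> d < n. f d)"
proof -
  have "{d. d dvd n} = insert n {d. d dvd n \<and> d < n}"
    using assms by (auto dest: dvd_imp_le)
  then show ?thesis by simp
qed

lemma dconv_left_cancel:
  assumes "f 1 \<noteq> 0" "dconv f g = dconv f h" "n > 0"
  shows "g n = h n"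
  using \<open>n > 0\<close>
proof (induction n rule: less_induct)
  case (less n)
  let ?D = "{d. d dvd n \<and> d \<noteq> 1}"
  have split: "dconv f k n = f 1 * k n + (\<Sum>d\<in>?D. f d * k (n div d))" for k
  proof -
    have "{d. d dvd n} = insert 1 ?D" by auto
    moreover have "finite ?D" using less.prems by simp
    ultimately show ?thesis by (simp add: dconv_def)
  qed
  have "f d * g (n div d) = f d * h (n div d)" if "d \<in> ?D" for d
  proof -
    from that less.prems have "n div d < n" "n div d > 0"
      by (auto intro!: div_less_dividend simp: nat_dvd_not_less dvd_div_eq_0_iff elim!: dvdE)
    then show ?thesis using less.IH by simp
  qed
  then have "(\<Sum>d\<in>?D. f d * g (n div d)) = (\<Sum>d\<in>?D. f d * h (n div d))"
    by (rule sum.cong[OF refl])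
  then have "f 1 * g n = f 1 * h n"
    using split[of g] split[of h] assms(2) by (metis add_right_cancel)
  with assms(1) show ?case by simp
qed

lemma dinv_eqI:
  assumes inverse: "\<And>n. n > 0 \<Longrightarrow> dconv f g n = eps n" and "g 0 = 0"
  shows "dinv f = g"
  unfolding dinv_def
proof (rule the_equality)
  show "(\<forall>n>0. dconv f g n = eps n) \<and> g 0 = 0" using assms by blast
next
  fix g' assume g': "(\<forall>n>0. dconv f g' n = eps n) \<and> g' 0 = 0"
  have "dconv f g' = dconv f g"
    using g' inverse by (metis dconv_0 neq0_conv ext)
  moreover have "f 1 \<noteq> 0"
    using inverse[of 1] dconv_1[of f g] by (auto simp: eps_def)
  ultimately show "g' = g"
    using g' assms(2) by (metis dconv_left_cancel neq0_conv ext)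
qed

lemma dinv_dconv:
  assumes "dconv f f' = eps" "dconv g g' = eps"
  shows "dinv (dconv f g) = dconv f' g'"
proof (rule dinv_eqI)
  have "dconv (dconv f g) (dconv f' g') = dconv (dconv f f') (dconv g g')"
    by (simp only: dconv.assoc dconv.left_commute)
  then show "dconv (dconv f g) (dconv f' g') n = eps n" if "n > 0" for n
    using that by (simp add: assms dconv_eps)
qed simp

lemma prime_factorization_prod_primes:
  assumes "finite S" "\<And>p. p \<in> S \<Longrightarrow> prime p"
  shows "prime_factorization (\<Prod>S :: 'a :: factorial_semiring) = mset_set S"
  using assms prime_factorization_prod_mset_primes[of "mset_set S"] by (simp add: prod_unfold_prod_mset)

lemma prime_factors_prod_subset:
  assumes "S \<subseteq> prime_factors (n :: 'a :: factorial_semiring)"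
  shows "prime_factors (\<Prod>S) = S"
proof -
  from assms have "finite S" "\<And>p. p \<in> S \<Longrightarrow> prime p"
    by (auto intro: finite_subset in_prime_factors_imp_prime)
  then show ?thesis by (simp add: prime_factorization_prod_primes)
qed

lemma squarefree_prod_primes:
  assumes "\<And>p. p \<in> S \<Longrightarrow> prime p"
  shows "squarefree (\<Prod>S :: 'a :: factorial_semiring_gcd)"
  using assms by (intro squarefree_prod_coprime) (auto intro: primes_coprime squarefree_prime)

lemma prod_prime_factors_squarefree:
  assumes "squarefree (n :: nat)"
  shows "\<Prod>(prime_factors n) = n"
proof -
  from assms have "n \<noteq> 0" by (metis not_squarefree_0)
  with assms have "\<forall>p\<in>prime_factors n. multiplicity p n = 1"
    by (simp add: squarefree_factorial_semiring')
  then have "(\<Prod>p\<in>prime_factors n. p ^ multiplicity p n) = \<Prod>(prime_factors n)"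
    by (intro prod.cong) auto
  with prod_prime_factors[OF \<open>n \<noteq> 0\<close>] show ?thesis by simp
qed

lemma bij_betw_prod_squarefree_divisors:
  assumes "n > 0"
  shows "bij_betw (\<lambda>S. \<Prod>S) (Pow (prime_factors n)) {d. d dvd n \<and> squarefree (d :: nat)}"
proof (rule bij_betw_byWitness[where f'=prime_factors])
  show "\<forall>S\<in>Pow (prime_factors n). prime_factors (\<Prod>S) = S"
    using prime_factors_prod_subset by blast
  show "\<forall>d\<in>{d. d dvd n \<and> squarefree d}. \<Prod>(prime_factors d) = d"
    by (auto intro: prod_prime_factors_squarefree)
  show "prime_factors ` {d. d dvd n \<and> squarefree d} \<subseteq> Pow (prime_factors n)"
    using assms by (auto intro: dvd_prime_factors[THEN subsetD])
  show "(\<lambda>S. \<Prod>S) ` Pow (prime_factors n) \<subseteq> {d. d dvd n \<and> squarefree d}"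
  proof clarify
    fix S assume S: "S \<subseteq> prime_factors n"
    then have fin: "finite S" and primes: "\<And>p. p \<in> S \<Longrightarrow> prime p"
      by (auto intro: finite_subset in_prime_factors_imp_prime)
    then have "\<Prod>S \<noteq> 0" by (metis not_prime_0 prod_zero_iff)
    have "prime_factorization (\<Prod>S) = mset_set S"
      using fin primes by (rule prime_factorization_prod_primes)
    also have "\<dots> \<subseteq># mset_set (prime_factors n)"
      using S fin by simp
    also have "\<dots> \<subseteq># prime_factorization n" by (rule mset_set_set_mset_msubset)
    finally have "\<Prod>S dvd n"
      using \<open>\<Prod>S \<noteq> 0\<close> by (rule prime_factorization_subset_imp_dvd[rotated])
    then show "\<Prod>S dvd n \<and> squarefree (\<Prod>S)"
      using primes by (simp add: squarefree_prod_primes)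
  qed
qed

lemma sum_mu_divisors:
  assumes "n > 0"
  shows "(\<Sum>d | d dvd n. mu d) = eps n"
proof -
  have "(\<Sum>d | d dvd n. mu d) = (\<Sum>d | d dvd n \<and> squarefree d. (-1) ^ card (prime_factors d))"
    using assms by (intro sum.mono_neutral_cong_right) (auto simp: mu_def)
  also have "\<dots> = (\<Sum>S\<in>Pow (prime_factors n). (-1) ^ card (prime_factors (\<Prod>S)))"
    by (rule sum.reindex_bij_betw[symmetric, OF bij_betw_prod_squarefree_divisors[OF assms]])
  also have "\<dots> = (\<Sum>S\<in>Pow (prime_factors n). (-1) ^ card S)"
    by (intro sum.cong refl) (auto simp: prime_factors_prod_subset)
  also have "\<dots> = (\<Prod>p\<in>prime_factors n. 1 - 1)"
    using prod_diff_conv_sum[of "prime_factors n" "\<lambda>_. 1 :: complex" "\<lambda>_. 1"] by simp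
  also have "\<dots> = eps n"
    using assms by (auto simp: eps_def card_gt_0_iff prime_factorization_empty_iff)
  finally show ?thesis .
qed

lemma dconv_mu_one_fn: "dconv mu one_fn = eps"
proof
  fix n show "dconv mu one_fn n = eps n"
    by (cases "n = 0") (simp_all add: eps_def dconv_one_fn sum_mu_divisors)
qed

lemma dconv_mult_completely_multiplicative:
  assumes "\<And>a b. h (a * b) = h a * h b"
  shows "dconv (\<lambda>m. f m * h m) (\<lambda>m. g m * h m) n = dconv f g n * h n"
  unfolding dconv_def sum_distrib_right
proof (intro sum.cong refl)
  fix d assume "d \<in> {d. d dvd n}"
  then have "h n = h d * h (n div d)" by (metis assms dvd_mult_div_cancel mem_Collect_eq)
  then show "f d * h d * (g (n div d) * h (n div d)) = f d * g (n div d) * h n"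
    by (simp add: ac_simps)
qed

lemma id_pow_mult: "id_pow x (a * b) = id_pow x a * id_pow x b"
  unfolding id_pow_def of_nat_mult by (rule powr_times_real) auto

lemma id_pow_0_right [simp]: "id_pow x 0 = 0"
  by (simp add: id_pow_def)

lemma id_pow_0_left: "m > 0 \<Longrightarrow> id_pow 0 m = one_fn m"
  by (simp add: id_pow_def one_fn_def)

lemma dconv_mu_mult_completely_multiplicative:
  assumes "\<And>a b. h (a * b) = h a * h b" "h 1 = 1"
  shows "dconv h (\<lambda>m. mu m * h m) = eps"
proof
  fix n
  have "dconv h (\<lambda>m. mu m * h m) n = dconv (\<lambda>m. one_fn m * h m) (\<lambda>m. mu m * h m) n"
    by (simp add: one_fn_def)
  also have "\<dots> = eps n * h n"
    by (simp add: dconv_mult_completely_multiplicative assms(1) dconv.commute[of one_fn] dconv_mu_one_fn)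
  also have "\<dots> = eps n"
    using assms(2) by (simp add: eps_def)
  finally show "dconv h (\<lambda>m. mu m * h m) n = eps n" .
qed

lemma dconv_id_pow_mu_id_pow: "dconv (id_pow x) (\<lambda>m. mu m * id_pow x m) = eps"
  by (rule dconv_mu_mult_completely_multiplicative[OF id_pow_mult]) (simp add: id_pow_def)

lemma dinv_jordan: "dinv (jordan x) = dconv one_fn (\<lambda>m. mu m * id_pow x m)"
  unfolding jordan_def by (rule dinv_dconv[OF dconv_mu_one_fn dconv_id_pow_mu_id_pow])

lemma sigma_eq_dconv: "sigma x = dconv (id_pow x) one_fn"
  by (simp add: fun_eq_iff sigma_def dconv_one_fn id_pow_def)

definition two_eps_minus_one :: "nat \<Rightarrow> complex" where
  "two_eps_minus_one n = 2 * eps n - one_fn n"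

lemma dconv_two_eps_minus_one:
  assumes "n > 0"
  shows "dconv f two_eps_minus_one n = 2 * f n - dconv f one_fn n"
proof -
  have "dconv f two_eps_minus_one n = 2 * dconv f eps n - dconv f one_fn n"
    unfolding dconv_def two_eps_minus_one_def
    by (simp add: algebra_simps sum_subtractf sum_distrib_left)
  with assms show ?thesis by (simp add: dconv_eps)
qed

lemma dconv_kappa_one_fn:
  assumes "n > 0"
  shows "dconv (kappa x) one_fn n = 2 * kappa x n - id_pow x n"
  using assms
  by (simp add: dconv_one_fn sum_divisors_eq_proper_divisors kappa.simps[of x n] id_pow_def)

lemma dconv_kappa_two_eps_minus_one: "dconv (kappa x) two_eps_minus_one = id_pow x"
proof
  fix n show "dconv (kappa x) two_eps_minus_one n = id_pow x n"
    by (cases "n = 0") (simp_all add: dconv_two_eps_minus_one dconv_kappa_one_fn)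
qed

lemma dconv_kappa_sigma_swap:
  assumes "n > 0"
  shows "dconv (kappa x) (sigma y) n = dconv (kappa y) (sigma x) n"
proof (rule dconv_left_cancel[OF _ _ assms])
  have reduce: "dconv two_eps_minus_one (dconv (kappa x) (sigma y))
              = dconv (id_pow x) (dconv (id_pow y) one_fn)" for x y
  proof -
    have "dconv two_eps_minus_one (dconv (kappa x) (sigma y))
        = dconv (dconv (kappa x) two_eps_minus_one) (sigma y)"
      by (simp only: dconv.assoc dconv.commute dconv.left_commute)
    then show ?thesis by (simp add: dconv_kappa_two_eps_minus_one sigma_eq_dconv)
  qed
  show "dconv two_eps_minus_one (dconv (kappa x) (sigma y))
      = dconv two_eps_minus_one (dconv (kappa y) (sigma x))"
    by (simp only: reduce dconv.left_commute[of "id_pow x"])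
qed (simp add: two_eps_minus_one_def eps_def one_fn_def)

lemma kappa_eq_half_id_pow_plus_divisor_sum:
  assumes "n > 0"
  shows "kappa x n = (id_pow x n + dconv one_fn (kappa x) n) / 2"
  using assms by (simp add: dconv.commute[of one_fn] dconv_kappa_one_fn)

lemma kappa_eq_dconv_jordan_kappa_0:
  assumes "n > 0"
  shows "kappa x n = dconv (jordan x) (kappa 0) n"
proof (rule dconv_left_cancel[OF _ _ assms])
  have "dconv two_eps_minus_one (dconv (jordan x) (kappa 0))
      = dconv (jordan x) (dconv (kappa 0) two_eps_minus_one)"
    by (simp only: dconv.assoc dconv.commute dconv.left_commute)
  also have "\<dots> = dconv (dconv (id_pow x) mu) one_fn"
    unfolding dconv_kappa_two_eps_minus_one jordan_def dconv.commute[of mu]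
    by (rule dconv_cong) (simp_all add: id_pow_0_left)
  also have "\<dots> = id_pow x"
    by (simp add: dconv.assoc dconv_mu_one_fn dconv_eps_eq)
  finally show "dconv two_eps_minus_one (kappa x)
              = dconv two_eps_minus_one (dconv (jordan x) (kappa 0))"
    by (simp add: dconv.commute[of two_eps_minus_one] dconv_kappa_two_eps_minus_one)
qed (simp add: two_eps_minus_one_def eps_def one_fn_def)

lemma dinv_kappa: "dinv (kappa x) = dconv (\<lambda>m. mu m * id_pow x m) two_eps_minus_one"
proof (rule dinv_eqI)
  have "dconv (kappa x) (dconv (\<lambda>m. mu m * id_pow x m) two_eps_minus_one)
      = dconv (dconv (kappa x) two_eps_minus_one) (\<lambda>m. mu m * id_pow x m)"
    by (simp only: dconv.assoc dconv.commute dconv.left_commute)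
  then show "dconv (kappa x) (dconv (\<lambda>m. mu m * id_pow x m) two_eps_minus_one) n = eps n" for n
    by (simp add: dconv_kappa_two_eps_minus_one dconv_id_pow_mu_id_pow)
qed simp

lemma two_mu_minus_eps_eq_dconv: "(\<lambda>m. 2 * mu m - eps m) = dconv mu two_eps_minus_one"
proof
  fix n show "2 * mu n - eps n = dconv mu two_eps_minus_one n"
    by (cases "n = 0") (simp_all add: mu_def eps_def dconv_two_eps_minus_one dconv_mu_one_fn)
qed

lemma dinv_kappa_eq_dconv_dinv_jordan:
  assumes "n > 0"
  shows "dinv (kappa x) n = dconv (dinv (jordan x)) (\<lambda>m. 2 * mu m - eps m) n"
proof -
  have "dconv (dinv (jordan x)) (\<lambda>m. 2 * mu m - eps m)
      = dconv (dconv mu one_fn) (dconv (\<lambda>m. mu m * id_pow x m) two_eps_minus_one)"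
    unfolding dinv_jordan two_mu_minus_eps_eq_dconv
    by (simp only: dconv.assoc dconv.commute dconv.left_commute)
  with assms show ?thesis
    by (simp add: dconv_mu_one_fn dconv.commute[of eps] dconv_eps dinv_kappa)
qed

lemma two_minus_sigma_0_eq_dconv:
  assumes "m > 0"
  shows "2 * one_fn m - sigma 0 m = dconv two_eps_minus_one one_fn m"
proof -
  have "sigma 0 = dconv one_fn one_fn"
    unfolding sigma_eq_dconv by (rule dconv_cong) (simp_all add: id_pow_0_left)
  with assms show ?thesis
    by (simp add: dconv.commute[of two_eps_minus_one] dconv_two_eps_minus_one)
qed

lemma sigma_eq_dconv_kappa:
  assumes "n > 0"
  shows "sigma x n = dconv (kappa x) (\<lambda>m. 2 * one_fn m - sigma 0 m) n"
proof -
  have "dconv (kappa x) (\<lambda>m. 2 * one_fn m - sigma 0 m)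
      = dconv (kappa x) (dconv two_eps_minus_one one_fn)"
    by (rule dconv_cong) (simp_all add: two_minus_sigma_0_eq_dconv)
  also have "\<dots> = sigma x"
    by (simp add: dconv.assoc[symmetric] dconv_kappa_two_eps_minus_one sigma_eq_dconv)
  finally show ?thesis by simp
qed

lemma summable_norm_linear_recurrence:
  fixes b c :: "nat \<Rightarrow> 'a :: real_normed_div_algebra"
  assumes rec: "\<And>k. b (Suc k) = r * b k + c k" and r: "norm r < 1"
    and c: "summable (\<lambda>k. norm (c k))"
  shows "summable (\<lambda>k. norm (b k))"
proof (rule bounded_imp_summable)
  define C where "C = (\<Sum>k. norm (c k))"
  define B where "B = (norm (b 0) + C) / (1 - norm r)"
  have "C \<ge> 0" unfolding C_def by (rule suminf_nonneg[OF c]) simp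
  have B: "norm (b 0) + norm r * B + C = B"
    using r by (simp add: B_def field_simps)
  have "norm r * B \<ge> 0"
    using r \<open>C \<ge> 0\<close> by (simp add: B_def)
  show "(\<Sum>k\<le>K. norm (b k)) \<le> B" for K
  proof (induction K)
    case 0
    show ?case using B \<open>norm r * B \<ge> 0\<close> \<open>C \<ge> 0\<close> by simp
  next
    case (Suc K)
    have "(\<Sum>k\<le>K. norm (b (Suc k))) \<le> (\<Sum>k\<le>K. norm r * norm (b k) + norm (c k))"
      by (intro sum_mono) (metis rec norm_mult norm_triangle_ineq)
    also have "\<dots> = norm r * (\<Sum>k\<le>K. norm (b k)) + (\<Sum>k\<le>K. norm (c k))"
      by (simp add: sum.distrib sum_distrib_left)
    also have "\<dots> \<le> norm r * B + C"
      using Suc.IH sum_le_suminf[OF c, of "{..K}"]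
      by (intro add_mono mult_left_mono) (auto simp: C_def)
    finally show ?case
      unfolding sum.atMost_Suc_shift using B by linarith
  qed
qed simp

lemma sums_linear_recurrence:
  fixes b c :: "nat \<Rightarrow> 'a :: {banach, real_normed_field}"
  assumes rec: "\<And>k. b (Suc k) = r * b k + c k" and r: "norm r < 1"
    and c: "summable (\<lambda>k. norm (c k))" "c sums t"
  shows "b sums ((b 0 + t) / (1 - r))"
proof -
  have "summable b"
    using summable_norm_linear_recurrence[OF rec r c(1)] by (rule summable_norm_cancel)
  then have b: "b sums suminf b" by (rule summable_sums)
  then have "(\<lambda>k. b (Suc k)) sums (suminf b - b 0)" by (simp add: sums_Suc_iff)
  moreover have "(\<lambda>k. b (Suc k)) sums (r * suminf b + t)"
    unfolding rec by (intro sums_add sums_mult b c(2))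
  ultimately have "suminf b - b 0 = r * suminf b + t" by (rule sums_unique2)
  moreover have "1 - r \<noteq> 0" using r by auto
  ultimately have "suminf b = (b 0 + t) / (1 - r)" by (simp add: field_simps)
  with b show ?thesis by simp
qed

lemma dconv_dpow_one_fn_Suc:
  "dconv (dpow one_fn (Suc k)) f n = (\<Sum>d | d dvd n. dconv (dpow one_fn k) f d)"
proof -
  have "dconv (dpow one_fn (Suc k)) f = dconv (dconv (dpow one_fn k) f) one_fn"
    by (simp only: dpow.simps dconv.assoc dconv.commute dconv.left_commute)
  then show ?thesis by (simp add: dconv_one_fn)
qed

lemma kappa_series:
  assumes "n > 0"
  shows "summable (\<lambda>k. norm (dconv (dpow one_fn k) (id_pow x) n / 2 ^ (k + 1)))
       \<and> (\<lambda>k. dconv (dpow one_fn k) (id_pow x) n / 2 ^ (k + 1)) sums kappa x n"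
  using assms
proof (induction n rule: less_induct)
  case (less n)
  define b where "b m k = dconv (dpow one_fn k) (id_pow x) m / 2 ^ (k + 1)" for m k
  define D where "D = {d. d dvd n \<and> d < n}"
  define c where "c k = (\<Sum>d\<in>D. b d k) / 2" for k
  have IH: "summable (\<lambda>k. norm (b d k)) \<and> b d sums kappa x d" if "d \<in> D" for d
    using that less.prems unfolding b_def D_def by (intro less.IH) (auto intro: gr0I)
  have rec: "b n (Suc k) = 1 / 2 * b n k + c k" for k
  proof -
    have "dconv (dpow one_fn (Suc k)) (id_pow x) n
        = dconv (dpow one_fn k) (id_pow x) n + (\<Sum>d\<in>D. dconv (dpow one_fn k) (id_pow x) d)"
      unfolding D_def dconv_dpow_one_fn_Suc using less.prems by (rule sum_divisors_eq_proper_divisors)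
    then show ?thesis
      by (simp add: b_def c_def sum_divide_distrib[symmetric] add_divide_distrib)
  qed
  have "summable (\<lambda>k. norm (c k))"
  proof (rule summable_comparison_test')
    show "summable (\<lambda>k. (\<Sum>d\<in>D. norm (b d k)) / 2)"
      using IH by (intro summable_divide summable_sum) blast
    show "norm (norm (c k)) \<le> (\<Sum>d\<in>D. norm (b d k)) / 2" for k
      unfolding c_def using norm_sum[of "\<lambda>d. b d k" D] by (simp add: norm_divide)
  qed
  moreover have "c sums ((\<Sum>d\<in>D. kappa x d) / 2)"
    unfolding c_def using IH by (intro sums_divide sums_sum) blast
  ultimately have "b n sums ((b n 0 + (\<Sum>d\<in>D. kappa x d) / 2) / (1 - 1 / 2))"
    by (intro sums_linear_recurrence[of "b n" "1 / 2" c, OF rec]) simp_all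
  also have "(b n 0 + (\<Sum>d\<in>D. kappa x d) / 2) / (1 - 1 / 2) = kappa x n"
  proof -
    have "b n 0 = id_pow x n / 2"
      using less.prems by (simp add: b_def dconv.commute[of eps] dconv_eps)
    then show ?thesis
      using less.prems by (simp add: D_def kappa.simps[of x n] id_pow_def)
  qed
  finally show ?case
    using summable_norm_linear_recurrence[of "b n" "1 / 2" c, OF rec] \<open>summable (\<lambda>k. norm (c k))\<close>
    by (simp add: b_def)
qed

theorem theorem2:
  fixes x y :: complex
  shows "(\<forall>n>0. dconv (kappa x) (sigma y) n = dconv (kappa y) (sigma x) n)
       \<and> (\<forall>n>0. kappa x n = (id_pow x n + dconv one_fn (kappa x) n) / 2)
       \<and> (\<forall>n>0. (\<lambda>k. dconv (dpow one_fn k) (id_pow x) n / 2 ^ (k + 1)) sums kappa x n)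
       \<and> (\<forall>n>0. kappa x n = dconv (jordan x) (kappa 0) n)
       \<and> (\<forall>n>0. dinv (kappa x) n = dconv (dinv (jordan x)) (\<lambda>m. 2 * mu m - eps m) n)
       \<and> (\<forall>n>0. sigma x n = dconv (kappa x) (\<lambda>m. 2 * one_fn m - sigma 0 m) n)"
  using dconv_kappa_sigma_swap kappa_eq_half_id_pow_plus_divisor_sum kappa_series
        kappa_eq_dconv_jordan_kappa_0 dinv_kappa_eq_dconv_dinv_jordan sigma_eq_dconv_kappa
  by simp

end
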